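(* Let $G$ be a finite bipartite graph with vertex classes $A$ and $B$, and let $\lambda\geq 1$ be a real number. Then at least one of the following holds: (1) there is a vertex $v\in B$ and sets $A'\subseteq N(v)$ and $B'\subseteq B\setminus\{v\}$ such that $d(G[A',B'])\geq \lambda$; (2) there is a spanning subgraph $H\subseteq G$ with $d(H)\geq d(G)/(\lambda+1)$ and $d_H(x,y)\leq \lambda$ for all distinct $x,y\in B$.
   Context: $N(v)$ is the neighbourhood of $v$ in $G$. For disjoint vertex sets $A',B'$, $G[A',B']$ is the bipartite subgraph of $G$ with vertex set $A'\cup B'$ consisting of all edges of $G$ between $A'$ and $B'$. $d(\cdot)$ denotes average degree, $d(F)=2e(F)/|V(F)|$. For vertices $x,y$, the codegree $d_H(x,y)$ is the number of common neighbours of $x$ and $y$ in $H$. A spanning subgraph has the same vertex set as $G$. *)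

theory Defs
  imports Complex_Main
begin

text \<open>A finite bipartite graph with vertex classes A and B (disjoint finite sets) is
encoded by its edge set E, a set of pairs (a,b) with a in A and b in B.\<close>

definition avg_deg :: "'a set \<Rightarrow> ('a \<times> 'a) set \<Rightarrow> real" where
  "avg_deg V F = 2 * real (card F) / real (card V)"

definition bnbhd :: "('a \<times> 'a) set \<Rightarrow> 'a set \<Rightarrow> 'a \<Rightarrow> 'a set" where
  "bnbhd E A v = {a \<in> A. (a, v) \<in> E}"

definition bcodeg :: "('a \<times> 'a) set \<Rightarrow> 'a set \<Rightarrow> 'a \<Rightarrow> 'a \<Rightarrow> nat" where
  "bcodeg H A x y = card {a \<in> A. (a, x) \<in> H \<and> (a, y) \<in> H}"

end

theory Submission
  imports Defs
begin

text \<open>Take a largest subgraph H of E with all codegrees in B at most \<lambda>. Every edge (a, y)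
of E - H is blocked: some x \<noteq> y with (a, x) \<in> H already has codegree with y in (\<lambda> - 1, \<lambda>].
Charge (a, y) to such an x. The edges charged to x, together with the H-edges between
N_H(x) and the set Y_x of heavy codegree partners of x, form a subgraph of
G[N(x), B - {x}]; as each y \<in> Y_x sends at least \<lambda>/2 H-edges into N_H(x), failure of (1)
leaves room for at most \<lambda> |N_H(x)| / 2 charged edges. Summing over x gives
|E - H| \<le> \<lambda> |H| / 2, hence |E| \<le> (\<lambda> + 1) |H|.\<close>

definition codeg_bounded :: "('a \<times> 'a) set \<Rightarrow> 'a set \<Rightarrow> 'a set \<Rightarrow> real \<Rightarrow> bool" where
  "codeg_bounded H A B lam \<longleftrightarrow> (\<forall>x\<in>B. \<forall>y\<in>B. x \<noteq> y \<longrightarrow> real (bcodeg H A x y) \<le> lam)"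

lemma bcodeg_commute: "bcodeg H A x y = bcodeg H A y x"
  unfolding bcodeg_def by (simp add: conj_commute)

lemma bcodeg_insert_other:
  "x \<noteq> y \<Longrightarrow> z \<noteq> y \<Longrightarrow> bcodeg (insert (a, y) H) A x z = bcodeg H A x z"
  unfolding bcodeg_def by auto

lemma bcodeg_insert_nonadjacent:
  "x \<noteq> y \<Longrightarrow> (a, x) \<notin> H \<Longrightarrow> bcodeg (insert (a, y) H) A x y = bcodeg H A x y"
  unfolding bcodeg_def by (rule arg_cong[where f = card]) auto

lemma bcodeg_insert_le:
  assumes "finite A"
  shows "bcodeg (insert (a, y) H) A x y \<le> bcodeg H A x y + 1"
proof -
  have "{b \<in> A. (b, x) \<in> insert (a, y) H \<and> (b, y) \<in> insert (a, y) H}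
        \<subseteq> insert a {b \<in> A. (b, x) \<in> H \<and> (b, y) \<in> H}" by auto
  then have "bcodeg (insert (a, y) H) A x y \<le> card (insert a {b \<in> A. (b, x) \<in> H \<and> (b, y) \<in> H})"
    unfolding bcodeg_def using assms by (intro card_mono) auto
  also have "\<dots> \<le> bcodeg H A x y + 1"
    unfolding bcodeg_def using assms by (simp add: card_insert_if)
  finally show ?thesis .
qed

lemma codeg_bounded_insert:
  assumes "finite A" and bounded: "codeg_bounded H A B lam" and "y \<in> B"
    and unblocked: "\<And>x. x \<in> B \<Longrightarrow> x \<noteq> y \<Longrightarrow> (a, x) \<in> H \<Longrightarrow> real (bcodeg H A x y) + 1 \<le> lam"
  shows "codeg_bounded (insert (a, y) H) A B lam"
proof -
  have with_y: "real (bcodeg (insert (a, y) H) A x y) \<le> lam" if "x \<in> B" "x \<noteq> y" for x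
  proof (cases "(a, x) \<in> H")
    case True
    then show ?thesis
      using unblocked[OF that True] bcodeg_insert_le[OF \<open>finite A\<close>, of a y H x] by linarith
  next
    case False
    then show ?thesis
      using bounded \<open>y \<in> B\<close> that bcodeg_insert_nonadjacent[OF that(2) False]
      unfolding codeg_bounded_def by simp
  qed
  show ?thesis
    unfolding codeg_bounded_def
  proof (intro ballI impI)
    fix x z assume "x \<in> B" "z \<in> B" "x \<noteq> z"
    then consider "x = y" | "z = y" | "x \<noteq> y" "z \<noteq> y" by blast
    then show "real (bcodeg (insert (a, y) H) A x z) \<le> lam"
    proof cases
      case 1
      then show ?thesis using with_y[of z] \<open>z \<in> B\<close> \<open>x \<noteq> z\<close> by (simp add: bcodeg_commute)
    next
      case 2
      then show ?thesis using with_y[of x] \<open>x \<in> B\<close> \<open>x \<noteq> z\<close> by simp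
    next
      case 3
      have "real (bcodeg H A x z) \<le> lam"
        using bounded \<open>x \<in> B\<close> \<open>z \<in> B\<close> \<open>x \<noteq> z\<close> unfolding codeg_bounded_def by blast
      then show ?thesis using bcodeg_insert_other[OF 3] by simp
    qed
  qed
qed

lemma exists_maximum_codeg_bounded_subgraph:
  assumes "finite E" and "0 \<le> lam"
  obtains H where "H \<subseteq> E" and "codeg_bounded H A B lam"
    and "\<And>H'. H' \<subseteq> E \<Longrightarrow> codeg_bounded H' A B lam \<Longrightarrow> card H' \<le> card H"
proof -
  let ?P = "\<lambda>H. H \<subseteq> E \<and> codeg_bounded H A B lam"
  have "?P {}"
    using assms(2) by (simp add: codeg_bounded_def bcodeg_def)
  moreover have "\<forall>H. ?P H \<longrightarrow> card H < Suc (card E)"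
    using card_mono[OF assms(1)] by (simp add: less_Suc_eq_le)
  ultimately have "\<exists>H. ?P H \<and> (\<forall>H'. ?P H' \<longrightarrow> card H' \<le> card H)"
    by (rule Lattices_Big.ex_has_greatest_nat)
  then show ?thesis using that by blast
qed

lemma maximum_codeg_bounded_blocked:
  assumes "finite A" and "finite B" and "E \<subseteq> A \<times> B"
    and "H \<subseteq> E" and "codeg_bounded H A B lam"
    and maximum: "\<And>H'. H' \<subseteq> E \<Longrightarrow> codeg_bounded H' A B lam \<Longrightarrow> card H' \<le> card H"
    and edge: "(a, y) \<in> E - H"
  shows "\<exists>x\<in>B. x \<noteq> y \<and> (a, x) \<in> H \<and> lam < real (bcodeg H A x y) + 1"
proof (rule ccontr)
  assume "\<not> ?thesis"
  then have "codeg_bounded (insert (a, y) H) A B lam"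
    using assms edge by (intro codeg_bounded_insert) (auto simp: not_less)
  then have "card (insert (a, y) H) \<le> card H"
    using assms edge by (intro maximum) auto
  moreover have "finite H"
    using assms by (meson finite_SigmaI finite_subset)
  ultimately show False using edge by simp
qed

lemma card_eq_sum_card_bnbhd:
  assumes "F \<subseteq> A \<times> B" and "finite A" and "finite B"
  shows "card F = (\<Sum>y\<in>B. card (bnbhd F A y))"
proof -
  have "F = (\<lambda>(y, a). (a, y)) ` (SIGMA y:B. bnbhd F A y)"
    using assms(1) unfolding bnbhd_def by auto
  moreover have "inj_on (\<lambda>(y, a). (a, y)) (SIGMA y:B. bnbhd F A y)"
    by (auto simp: inj_on_def)
  ultimately have "card F = card (SIGMA y:B. bnbhd F A y)"
    by (metis card_image)
  also have "\<dots> = (\<Sum>y\<in>B. card (bnbhd F A y))"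
    using assms(2,3) unfolding bnbhd_def by (subst card_SigmaI) auto
  finally show ?thesis .
qed

lemma card_edges_from_bnbhd_eq_sum_bcodeg:
  assumes "finite A" and "finite Y"
  shows "card (H \<inter> (bnbhd H A x \<times> Y)) = (\<Sum>y\<in>Y. bcodeg H A x y)"
proof -
  have "card (H \<inter> (bnbhd H A x \<times> Y)) = (\<Sum>y\<in>Y. card (bnbhd (H \<inter> (bnbhd H A x \<times> Y)) A y))"
    using assms by (intro card_eq_sum_card_bnbhd) (auto simp: bnbhd_def)
  also have "\<dots> = (\<Sum>y\<in>Y. bcodeg H A x y)"
    by (rule sum.cong) (auto simp: bnbhd_def bcodeg_def intro!: arg_cong[where f = card])
  finally show ?thesis .
qed

lemma double_card_le_of_avg_deg_less:
  assumes "finite X" and "finite Y" and "X \<inter> Y = {}" and "F \<subseteq> X \<times> Y"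
    and "avg_deg (X \<union> Y) F < lam"
  shows "2 * real (card F) \<le> lam * real (card X) + lam * real (card Y)"
proof (cases "X \<union> Y = {}")
  case True
  then show ?thesis using assms(4) by simp
next
  case False
  then have "0 < card (X \<union> Y)" using assms(1,2) by (simp add: card_gt_0_iff)
  with assms(5) have "2 * real (card F) < lam * real (card (X \<union> Y))"
    unfolding avg_deg_def by (simp add: divide_less_eq)
  moreover have "card (X \<union> Y) = card X + card Y"
    using assms(1-3) by (rule card_Un_disjoint)
  ultimately show ?thesis by (simp add: distrib_left)
qed

lemma le_double_if_less_add_one: "1 \<le> (c::real) \<Longrightarrow> c < real n + 1 \<Longrightarrow> c \<le> 2 * real n"
  by (cases n) auto

lemma double_card_charged_edges_le:
  fixes A B :: "'a set" and E H F :: "('a \<times> 'a) set" and x :: 'a and lam :: real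
  defines "N \<equiv> bnbhd H A x" and "Y \<equiv> {y \<in> B - {x}. lam < real (bcodeg H A x y) + 1}"
  assumes "finite A" and "finite B" and "A \<inter> B = {}" and "E \<subseteq> A \<times> B" and "H \<subseteq> E"
    and "1 \<le> lam"
    and sparse: "avg_deg (N \<union> Y) (E \<inter> (N \<times> Y)) < lam"
    and "F \<subseteq> E - H" and F_sub: "F \<subseteq> N \<times> Y"
  shows "2 * real (card F) \<le> lam * real (card N)"
proof -
  have "finite N" "finite Y" "N \<inter> Y = {}"
    using assms(3-5) unfolding N_def Y_def bnbhd_def by auto
  let ?HNY = "H \<inter> (N \<times> Y)"
  have "finite (N \<times> Y)"
    using \<open>finite N\<close> \<open>finite Y\<close> by simp
  then have "finite F"
    using F_sub by (rule rev_finite_subset)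
  have "card (F \<union> ?HNY) \<le> card (E \<inter> (N \<times> Y))"
    using assms \<open>finite (N \<times> Y)\<close> by (intro card_mono) auto
  moreover have "card (F \<union> ?HNY) = card F + card ?HNY"
    using assms \<open>finite F\<close> \<open>finite (N \<times> Y)\<close> by (intro card_Un_disjoint) auto
  ultimately have "real (card F) + real (card ?HNY) \<le> real (card (E \<inter> (N \<times> Y)))"
    by (simp only: of_nat_add[symmetric] of_nat_le_iff)
  moreover have "2 * real (card (E \<inter> (N \<times> Y))) \<le> lam * real (card N) + lam * real (card Y)"
    using \<open>finite N\<close> \<open>finite Y\<close> \<open>N \<inter> Y = {}\<close> sparse
    by (intro double_card_le_of_avg_deg_less) auto
  moreover have "lam * real (card Y) \<le> 2 * real (card ?HNY)"
  proof -
    have "lam * real (card Y) = (\<Sum>y\<in>Y. lam)" by simp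
    also have "\<dots> \<le> (\<Sum>y\<in>Y. 2 * real (bcodeg H A x y))"
      using \<open>1 \<le> lam\<close> by (intro sum_mono le_double_if_less_add_one) (auto simp: Y_def)
    also have "\<dots> = 2 * real (card ?HNY)"
      unfolding N_def card_edges_from_bnbhd_eq_sum_bcodeg[OF \<open>finite A\<close> \<open>finite Y\<close>]
      by (simp add: sum_distrib_left)
    finally show ?thesis .
  qed
  ultimately show ?thesis by linarith
qed

lemma card_le_of_maximum_codeg_bounded:
  assumes "finite A" and "finite B" and "A \<inter> B = {}" and "E \<subseteq> A \<times> B" and "1 \<le> lam"
    and sparse: "\<And>v A' B'. v \<in> B \<Longrightarrow> A' \<subseteq> bnbhd E A v \<Longrightarrow> B' \<subseteq> B - {v} \<Longrightarrow>
      avg_deg (A' \<union> B') (E \<inter> (A' \<times> B')) < lam"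
    and "H \<subseteq> E" and "codeg_bounded H A B lam"
    and maximum: "\<And>H'. H' \<subseteq> E \<Longrightarrow> codeg_bounded H' A B lam \<Longrightarrow> card H' \<le> card H"
  shows "real (card E) \<le> (lam + 1) * real (card H)"
proof -
  have "\<forall>e\<in>E - H. \<exists>x. x \<in> B \<and> x \<noteq> snd e \<and> (fst e, x) \<in> H \<and> lam < real (bcodeg H A x (snd e)) + 1"
    using maximum_codeg_bounded_blocked[OF assms(1,2,4,7,8) maximum] by fastforce
  then obtain w where w: "\<And>e. e \<in> E - H \<Longrightarrow>
      w e \<in> B \<and> w e \<noteq> snd e \<and> (fst e, w e) \<in> H \<and> lam < real (bcodeg H A (w e) (snd e)) + 1"
    by (metis bchoice)
  define charged where "charged x = {e \<in> E - H. w e = x}" for x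
  have finite_E: "finite E"
    using assms(1,2,4) by (meson finite_SigmaI finite_subset)
  have charged_le: "2 * real (card (charged x)) \<le> lam * real (card (bnbhd H A x))" if "x \<in> B" for x
  proof (rule double_card_charged_edges_le[OF assms(1-4,7,5)])
    show "avg_deg (bnbhd H A x \<union> {y \<in> B - {x}. lam < real (bcodeg H A x y) + 1})
      (E \<inter> (bnbhd H A x \<times> {y \<in> B - {x}. lam < real (bcodeg H A x y) + 1})) < lam"
      using \<open>H \<subseteq> E\<close> that by (intro sparse) (auto simp: bnbhd_def)
    show "charged x \<subseteq> bnbhd H A x \<times> {y \<in> B - {x}. lam < real (bcodeg H A x y) + 1}"
      using w assms(4) by (fastforce simp: charged_def bnbhd_def)
  qed (auto simp: charged_def)
  have "E - H = (\<Union>x\<in>B. charged x)"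
    using w by (auto simp: charged_def)
  then have "card (E - H) \<le> (\<Sum>x\<in>B. card (charged x))"
    using card_UN_le[OF \<open>finite B\<close>] by simp
  then have "real (card (E - H)) \<le> (\<Sum>x\<in>B. real (card (charged x)))"
    by (metis of_nat_le_iff of_nat_sum)
  then have "2 * real (card (E - H)) \<le> (\<Sum>x\<in>B. 2 * real (card (charged x)))"
    by (simp add: sum_distrib_left[symmetric])
  also have "\<dots> \<le> (\<Sum>x\<in>B. lam * real (card (bnbhd H A x)))"
    using charged_le by (rule sum_mono)
  also have "\<dots> = lam * real (card H)"
    using assms(1,2,4,7) by (subst card_eq_sum_card_bnbhd[of H A B]) (auto simp: sum_distrib_left)
  finally have "2 * real (card (E - H)) \<le> lam * real (card H)" .
  moreover have "card E = card H + card (E - H)"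
    using finite_E \<open>H \<subseteq> E\<close> by (metis card_Diff_subset card_mono finite_subset le_add_diff_inverse)
  ultimately show ?thesis
    using \<open>1 \<le> lam\<close> by (simp add: algebra_simps)
qed

lemma avg_deg_div_le_if_card_le:
  assumes "real (card E) \<le> c * real (card H)" and "0 < c"
  shows "avg_deg V E / c \<le> avg_deg V H"
  using assms unfolding avg_deg_def
  by (cases "card V = 0") (simp_all add: divide_simps mult.commute)

theorem lemma5:
  fixes A B :: "'a set" and E :: "('a \<times> 'a) set" and lam :: real
  assumes "finite A" and "finite B" and "A \<inter> B = {}"
    and "E \<subseteq> A \<times> B"
    and "lam \<ge> 1"
  shows "(\<exists>v\<in>B. \<exists>A' B'. A' \<subseteq> bnbhd E A v \<and> B' \<subseteq> B - {v} \<and>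
            avg_deg (A' \<union> B') (E \<inter> (A' \<times> B')) \<ge> lam)
       \<or> (\<exists>H. H \<subseteq> E \<and> avg_deg (A \<union> B) H \<ge> avg_deg (A \<union> B) E / (lam + 1) \<and>
            (\<forall>x\<in>B. \<forall>y\<in>B. x \<noteq> y \<longrightarrow> real (bcodeg H A x y) \<le> lam))"
    (is "?dense \<or> ?sparse_subgraph")
proof (cases ?dense)
  case True
  then show ?thesis ..
next
  case False
  then have sparse: "avg_deg (A' \<union> B') (E \<inter> (A' \<times> B')) < lam"
    if "v \<in> B" "A' \<subseteq> bnbhd E A v" "B' \<subseteq> B - {v}" for v A' B'
    using that by (meson not_le)
  have "finite E"
    using assms(1,2,4) by (meson finite_SigmaI finite_subset)
  then obtain H where "H \<subseteq> E" and bounded: "codeg_bounded H A B lam"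
    and "\<And>H'. H' \<subseteq> E \<Longrightarrow> codeg_bounded H' A B lam \<Longrightarrow> card H' \<le> card H"
    using \<open>lam \<ge> 1\<close> exists_maximum_codeg_bounded_subgraph[of E lam A B] by auto
  then have "real (card E) \<le> (lam + 1) * real (card H)"
    using assms sparse by (intro card_le_of_maximum_codeg_bounded) auto
  then have "avg_deg (A \<union> B) E / (lam + 1) \<le> avg_deg (A \<union> B) H"
    using \<open>lam \<ge> 1\<close> by (intro avg_deg_div_le_if_card_le) auto
  then have ?sparse_subgraph
    using \<open>H \<subseteq> E\<close> bounded unfolding codeg_bounded_def by blast
  then show ?thesis ..
qed

end
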